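(* Let $C$ be a cofibrant object of a P-category $(\mathcal{C},P,\mathcal{F},\mathcal{W})$ and let $v:A\to B$ be a trivial fibration. Let $f_0,f_1:C\to A$ and let $h:C\to P(B)$ satisfy $(\delta^0_B,\delta^1_B)h=(vf_0,vf_1)$ (i.e. $h$ is a homotopy from $vf_0$ to $vf_1$). Then there exists $\widetilde h:C\to P(A)$ with $(\delta^0_A,\delta^1_A)\widetilde h=(f_0,f_1)$ and $P(v)\widetilde h=h$; that is, $h$ lifts to a homotopy $\widetilde h:f_0\simeq f_1$ with $P(v)\widetilde h=h$.
   Context: Let $\mathcal{C}$ have finite products and a final object $e$. A functorial path is a functor $P$ with natural transformations $\iota:1\to P$, $\delta^0,\delta^1:P\to1$, $\delta^0\iota=\delta^1\iota=1$; a homotopy $h:f\simeq g$ is $h:A\to P(B)$ with $\delta^0h=f$, $\delta^1h=g$. The path is equipped with a symmetry $\tau$ ($\tau\tau=1$, $\tau\iota=\iota$, $\delta^k\tau=\delta^{1-k}$), a coproduct $c:P\to P^2$ ($c_{P(A)}c_A=P(c_A)c_A$, $\delta^1_{P(A)}c_A=P(\delta^1_A)c_A=1$, $c_A\iota_A=\iota_{P(A)}\iota_A$, $\delta^0_{P(A)}c_A=P(\delta^0_A)c_A=\iota_A\delta^0_A$), an interchange $\mu$ (natural automorphism of $P^2$, $\delta^k_{P(A)}\mu_A=P(\delta^k_A)$, $P(\delta^k_A)\mu_A=\delta^k_{P(A)}$) and a folding map $\nabla:P^2\to P$ ($\delta^k\nabla=\delta^k\delta^k_P$, $\nabla\iota_P=1$).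 A P-category has classes $\mathcal{F}$ (fibrations), $\mathcal{W}$ (weak equivalences); trivial fibrations are morphisms in both; axioms: (P$_1$) both contain isomorphisms and are closed under composition, $\mathcal{W}$ 2-out-of-3, each $A\to e$ a fibration; (P$_2$) $\iota_A\in\mathcal{W}$, $(\delta^0_A,\delta^1_A)\in\mathcal{F}$, $\delta^0_A,\delta^1_A$ trivial fibrations; (P$_3$) for $u:A\to C$ and a fibration $v:B\to C$, $A\times_CB$ exists, $\pi_1$ is a fibration, trivial if $v$ is, and $\pi_2\in\mathcal{W}$ if $u\in\mathcal{W}$; (P$_4$) $P$ preserves fibrations, weak equivalences and fibre products; (P$_5$) for each fibration $v:A\to B$, $((\delta^0_A,\delta^1_A),P(v)):P(A)\to(A\times A)\times_{B\times B}P(B)$ is a fibration. An object $C$ is cofibrant if for every trivial fibration $w:X\to Y$ and every $f:C\to Y$ there is $g:C\to X$ with $wg=f$. *)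

theory Defs
  imports Main
begin

text \<open>A category is represented with every element of type 'a being a morphism
and every element of type 'o an object.\<close>

record ('o, 'a) pcat =
  cdom  :: "'a \<Rightarrow> 'o"
  ccod  :: "'a \<Rightarrow> 'o"
  ccomp :: "'a \<Rightarrow> 'a \<Rightarrow> 'a"   (* ccomp g f = g o f *)
  cid   :: "'o \<Rightarrow> 'a"
  cprod :: "'o \<Rightarrow> 'o \<Rightarrow> 'o"
  cpr1  :: "'o \<Rightarrow> 'o \<Rightarrow> 'a"
  cpr2  :: "'o \<Rightarrow> 'o \<Rightarrow> 'a"
  cterm :: "'o"
  Po    :: "'o \<Rightarrow> 'o"
  Pa    :: "'a \<Rightarrow> 'a"
  iota  :: "'o \<Rightarrow> 'a"
  d0    :: "'o \<Rightarrow> 'a"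
  d1    :: "'o \<Rightarrow> 'a"
  tau   :: "'o \<Rightarrow> 'a"
  cop   :: "'o \<Rightarrow> 'a"
  mu    :: "'o \<Rightarrow> 'a"
  nabla :: "'o \<Rightarrow> 'a"
  fib   :: "'a set"
  we    :: "'a set"

definition hom :: "('o,'a) pcat \<Rightarrow> 'a \<Rightarrow> 'o \<Rightarrow> 'o \<Rightarrow> bool" where
  "hom C f X Y \<longleftrightarrow> cdom C f = X \<and> ccod C f = Y"

definition is_iso :: "('o,'a) pcat \<Rightarrow> 'a \<Rightarrow> bool" where
  "is_iso C f \<longleftrightarrow> (\<exists>g. hom C g (ccod C f) (cdom C f) \<and>
      ccomp C g f = cid C (cdom C f) \<and> ccomp C f g = cid C (ccod C f))"

definition is_category :: "('o,'a) pcat \<Rightarrow> bool" where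
  "is_category C \<longleftrightarrow>
     (\<forall>X. hom C (cid C X) X X) \<and>
     (\<forall>f g. cdom C g = ccod C f \<longrightarrow> hom C (ccomp C g f) (cdom C f) (ccod C g)) \<and>
     (\<forall>f. ccomp C f (cid C (cdom C f)) = f \<and> ccomp C (cid C (ccod C f)) f = f) \<and>
     (\<forall>f g h. cdom C g = ccod C f \<longrightarrow> cdom C h = ccod C g \<longrightarrow>
         ccomp C h (ccomp C g f) = ccomp C (ccomp C h g) f)"

definition has_products :: "('o,'a) pcat \<Rightarrow> bool" where
  "has_products C \<longleftrightarrow>
     (\<forall>A B. hom C (cpr1 C A B) (cprod C A B) A \<and> hom C (cpr2 C A B) (cprod C A B) B \<and>
        (\<forall>W f g. hom C f W A \<longrightarrow> hom C g W B \<longrightarrow>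
           (\<exists>!h. hom C h W (cprod C A B) \<and> ccomp C (cpr1 C A B) h = f \<and> ccomp C (cpr2 C A B) h = g))) \<and>
     (\<forall>A. \<exists>!t. hom C t A (cterm C))"

definition pair :: "('o,'a) pcat \<Rightarrow> 'a \<Rightarrow> 'a \<Rightarrow> 'a" where
  "pair C f g = (THE h. hom C h (cdom C f) (cprod C (ccod C f) (ccod C g)) \<and>
       ccomp C (cpr1 C (ccod C f) (ccod C g)) h = f \<and> ccomp C (cpr2 C (ccod C f) (ccod C g)) h = g)"

definition prodmap :: "('o,'a) pcat \<Rightarrow> 'a \<Rightarrow> 'a \<Rightarrow> 'a" where
  "prodmap C f g = pair C (ccomp C f (cpr1 C (cdom C f) (cdom C g)))
                          (ccomp C g (cpr2 C (cdom C f) (cdom C g)))"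

definition to_term :: "('o,'a) pcat \<Rightarrow> 'o \<Rightarrow> 'a" where
  "to_term C A = (THE t. hom C t A (cterm C))"

definition is_pullback :: "('o,'a) pcat \<Rightarrow> 'a \<Rightarrow> 'a \<Rightarrow> 'o \<Rightarrow> 'a \<Rightarrow> 'a \<Rightarrow> bool" where
  "is_pullback C u v Q q1 q2 \<longleftrightarrow>
     ccod C u = ccod C v \<and> hom C q1 Q (cdom C u) \<and> hom C q2 Q (cdom C v) \<and>
     ccomp C u q1 = ccomp C v q2 \<and>
     (\<forall>W a b. hom C a W (cdom C u) \<longrightarrow> hom C b W (cdom C v) \<longrightarrow> ccomp C u a = ccomp C v b \<longrightarrow>
        (\<exists>!k. hom C k W Q \<and> ccomp C q1 k = a \<and> ccomp C q2 k = b))"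

definition is_functor_P :: "('o,'a) pcat \<Rightarrow> bool" where
  "is_functor_P C \<longleftrightarrow>
     (\<forall>f. hom C (Pa C f) (Po C (cdom C f)) (Po C (ccod C f))) \<and>
     (\<forall>X. Pa C (cid C X) = cid C (Po C X)) \<and>
     (\<forall>f g. cdom C g = ccod C f \<longrightarrow> Pa C (ccomp C g f) = ccomp C (Pa C g) (Pa C f))"

definition functorial_path :: "('o,'a) pcat \<Rightarrow> bool" where
  "functorial_path C \<longleftrightarrow> is_functor_P C \<and>
     (\<forall>A. hom C (iota C A) A (Po C A) \<and> hom C (d0 C A) (Po C A) A \<and> hom C (d1 C A) (Po C A) A) \<and>
     (\<forall>f. ccomp C (Pa C f) (iota C (cdom C f)) = ccomp C (iota C (ccod C f)) f) \<and>
     (\<forall>f. ccomp C (d0 C (ccod C f)) (Pa C f) = ccomp C f (d0 C (cdom C f))) \<and>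
     (\<forall>f. ccomp C (d1 C (ccod C f)) (Pa C f) = ccomp C f (d1 C (cdom C f))) \<and>
     (\<forall>A. ccomp C (d0 C A) (iota C A) = cid C A \<and> ccomp C (d1 C A) (iota C A) = cid C A)"

definition has_symmetry :: "('o,'a) pcat \<Rightarrow> bool" where
  "has_symmetry C \<longleftrightarrow>
     (\<forall>A. hom C (tau C A) (Po C A) (Po C A)) \<and>
     (\<forall>f. ccomp C (Pa C f) (tau C (cdom C f)) = ccomp C (tau C (ccod C f)) (Pa C f)) \<and>
     (\<forall>A. ccomp C (tau C A) (tau C A) = cid C (Po C A) \<and>
          ccomp C (tau C A) (iota C A) = iota C A \<and>
          ccomp C (d0 C A) (tau C A) = d1 C A \<and> ccomp C (d1 C A) (tau C A) = d0 C A)"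

definition has_coproduct :: "('o,'a) pcat \<Rightarrow> bool" where
  "has_coproduct C \<longleftrightarrow>
     (\<forall>A. hom C (cop C A) (Po C A) (Po C (Po C A))) \<and>
     (\<forall>f. ccomp C (Pa C (Pa C f)) (cop C (cdom C f)) = ccomp C (cop C (ccod C f)) (Pa C f)) \<and>
     (\<forall>A. ccomp C (cop C (Po C A)) (cop C A) = ccomp C (Pa C (cop C A)) (cop C A) \<and>
          ccomp C (d1 C (Po C A)) (cop C A) = cid C (Po C A) \<and>
          ccomp C (Pa C (d1 C A)) (cop C A) = cid C (Po C A) \<and>
          ccomp C (cop C A) (iota C A) = ccomp C (iota C (Po C A)) (iota C A) \<and>
          ccomp C (d0 C (Po C A)) (cop C A) = ccomp C (iota C A) (d0 C A) \<and>
          ccomp C (Pa C (d0 C A)) (cop C A) = ccomp C (iota C A) (d0 C A))"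

definition has_interchange :: "('o,'a) pcat \<Rightarrow> bool" where
  "has_interchange C \<longleftrightarrow>
     (\<forall>A. hom C (mu C A) (Po C (Po C A)) (Po C (Po C A)) \<and> is_iso C (mu C A)) \<and>
     (\<forall>f. ccomp C (Pa C (Pa C f)) (mu C (cdom C f)) = ccomp C (mu C (ccod C f)) (Pa C (Pa C f))) \<and>
     (\<forall>A. ccomp C (d0 C (Po C A)) (mu C A) = Pa C (d0 C A) \<and>
          ccomp C (d1 C (Po C A)) (mu C A) = Pa C (d1 C A) \<and>
          ccomp C (Pa C (d0 C A)) (mu C A) = d0 C (Po C A) \<and>
          ccomp C (Pa C (d1 C A)) (mu C A) = d1 C (Po C A))"

definition has_folding :: "('o,'a) pcat \<Rightarrow> bool" where
  "has_folding C \<longleftrightarrow>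
     (\<forall>A. hom C (nabla C A) (Po C (Po C A)) (Po C A)) \<and>
     (\<forall>f. ccomp C (Pa C f) (nabla C (cdom C f)) = ccomp C (nabla C (ccod C f)) (Pa C (Pa C f))) \<and>
     (\<forall>A. ccomp C (d0 C A) (nabla C A) = ccomp C (d0 C A) (d0 C (Po C A)) \<and>
          ccomp C (d1 C A) (nabla C A) = ccomp C (d1 C A) (d1 C (Po C A)) \<and>
          ccomp C (nabla C A) (iota C (Po C A)) = cid C (Po C A))"

definition trivfib :: "('o,'a) pcat \<Rightarrow> 'a set" where
  "trivfib C = fib C \<inter> we C"

definition P_category :: "('o,'a) pcat \<Rightarrow> bool" where
  "P_category C \<longleftrightarrow>
     is_category C \<and> has_products C \<and> functorial_path C \<and> has_symmetry C \<and>
     has_coproduct C \<and> has_interchange C \<and> has_folding C \<and>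
     \<comment> \<open>(P1)\<close>
     (\<forall>f. is_iso C f \<longrightarrow> f \<in> fib C \<and> f \<in> we C) \<and>
     (\<forall>f g. cdom C g = ccod C f \<longrightarrow> f \<in> fib C \<longrightarrow> g \<in> fib C \<longrightarrow> ccomp C g f \<in> fib C) \<and>
     (\<forall>f g. cdom C g = ccod C f \<longrightarrow> f \<in> we C \<longrightarrow> g \<in> we C \<longrightarrow> ccomp C g f \<in> we C) \<and>
     (\<forall>f g. cdom C g = ccod C f \<longrightarrow> f \<in> we C \<longrightarrow> ccomp C g f \<in> we C \<longrightarrow> g \<in> we C) \<and>
     (\<forall>f g. cdom C g = ccod C f \<longrightarrow> g \<in> we C \<longrightarrow> ccomp C g f \<in> we C \<longrightarrow> f \<in> we C) \<and>
     (\<forall>A. to_term C A \<in> fib C) \<and>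
     \<comment> \<open>(P2)\<close>
     (\<forall>A. iota C A \<in> we C \<and> pair C (d0 C A) (d1 C A) \<in> fib C \<and>
          d0 C A \<in> trivfib C \<and> d1 C A \<in> trivfib C) \<and>
     \<comment> \<open>(P3)\<close>
     (\<forall>u v. ccod C u = ccod C v \<longrightarrow> v \<in> fib C \<longrightarrow>
        (\<exists>Q q1 q2. is_pullback C u v Q q1 q2 \<and> q1 \<in> fib C \<and>
           (v \<in> trivfib C \<longrightarrow> q1 \<in> trivfib C) \<and> (u \<in> we C \<longrightarrow> q2 \<in> we C))) \<and>
     \<comment> \<open>(P4)\<close>
     (\<forall>f. f \<in> fib C \<longrightarrow> Pa C f \<in> fib C) \<and>
     (\<forall>f. f \<in> we C \<longrightarrow> Pa C f \<in> we C) \<and>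
     (\<forall>u v Q q1 q2. v \<in> fib C \<longrightarrow> is_pullback C u v Q q1 q2 \<longrightarrow>
        is_pullback C (Pa C u) (Pa C v) (Po C Q) (Pa C q1) (Pa C q2)) \<and>
     \<comment> \<open>(P5)\<close>
     (\<forall>v. v \<in> fib C \<longrightarrow>
        (\<forall>Q q1 q2 k. is_pullback C (prodmap C v v) (pair C (d0 C (ccod C v)) (d1 C (ccod C v))) Q q1 q2 \<longrightarrow>
           hom C k (Po C (cdom C v)) Q \<longrightarrow>
           ccomp C q1 k = pair C (d0 C (cdom C v)) (d1 C (cdom C v)) \<longrightarrow>
           ccomp C q2 k = Pa C v \<longrightarrow> k \<in> fib C))"

definition cofibrant :: "('o,'a) pcat \<Rightarrow> 'o \<Rightarrow> bool" where
  "cofibrant C X \<longleftrightarrow>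
     (\<forall>w f. w \<in> trivfib C \<longrightarrow> hom C f X (ccod C w) \<longrightarrow>
        (\<exists>g. hom C g X (cdom C w) \<and> ccomp C w g = f))"

end

theory Submission
  imports Defs
begin

text \<open>The ends map (d0,d1) : P(A) \<rightarrow> A \<times> A and P(v) induce a comparison map k from P(A)
into the pullback Q of v \<times> v along (d0,d1) : P(B) \<rightarrow> B \<times> B. By (P5) k is a fibration. It is
also a weak equivalence: v \<times> v = (v \<times> 1)(1 \<times> v) is a trivial fibration, each factor being a
base change of v along a projection, so the projection q2 : Q \<rightarrow> P(B) is a weak equivalence by
(P3); since q2 k = P(v) is one by (P4), 2-out-of-3 applies. The data ((f0,f1), h) form a map
X \<rightarrow> Q, and its lift along the trivial fibration k, which exists as X is cofibrant, is the
required homotopy.\<close>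

definition product_cone :: "('o,'a) pcat \<Rightarrow> 'o \<Rightarrow> 'a \<Rightarrow> 'a \<Rightarrow> 'o \<Rightarrow> 'o \<Rightarrow> bool" where
  "product_cone C P p r X Y \<longleftrightarrow> hom C p P X \<and> hom C r P Y \<and>
     (\<forall>W a b. hom C a W X \<longrightarrow> hom C b W Y \<longrightarrow>
        (\<exists>!k. hom C k W P \<and> ccomp C p k = a \<and> ccomp C r k = b))"

lemma product_cone_swap: "product_cone C P p r X Y \<Longrightarrow> product_cone C P r p Y X"
  unfolding product_cone_def by blast

lemma product_cone_cprod:
  "has_products C \<Longrightarrow> product_cone C (cprod C X Y) (cpr1 C X Y) (cpr2 C X Y) X Y"
  unfolding has_products_def product_cone_def by blast

lemma pullback_lift:
  assumes "is_pullback C u w Q q1 q2" "hom C a W (cdom C u)" "hom C b W (cdom C w)"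
    "ccomp C u a = ccomp C w b"
  obtains k where "hom C k W Q" "ccomp C q1 k = a" "ccomp C q2 k = b"
  using assms unfolding is_pullback_def by blast

lemma prodmap_eq:
  "hom C f A A' \<Longrightarrow> hom C g B B' \<Longrightarrow>
   prodmap C f g = pair C (ccomp C f (cpr1 C A B)) (ccomp C g (cpr2 C A B))"
  unfolding prodmap_def hom_def by auto

context
  fixes C :: "('o,'a) pcat"
  assumes cat: "is_category C"
begin

lemma hom_id: "hom C (cid C X) X X"
  using cat unfolding is_category_def by blast

lemma hom_comp: "hom C f X Y \<Longrightarrow> hom C g Y Z \<Longrightarrow> hom C (ccomp C g f) X Z"
  using cat unfolding is_category_def hom_def by metis

lemma comp_id_left: "hom C f X Y \<Longrightarrow> ccomp C (cid C Y) f = f"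
  using cat unfolding is_category_def hom_def by metis

lemma comp_id_right: "hom C f X Y \<Longrightarrow> ccomp C f (cid C X) = f"
  using cat unfolding is_category_def hom_def by metis

lemma comp_assoc:
  "hom C f X Y \<Longrightarrow> hom C g Y Z \<Longrightarrow> hom C k Z W \<Longrightarrow>
   ccomp C k (ccomp C g f) = ccomp C (ccomp C k g) f"
  using cat unfolding is_category_def hom_def by metis

lemma product_cone_eqI:
  assumes "product_cone C P p r X Y" "hom C k W P" "hom C k' W P"
    "ccomp C p k = ccomp C p k'" "ccomp C r k = ccomp C r k'"
  shows "k = k'"
proof -
  have "hom C (ccomp C p k) W X" "hom C (ccomp C r k) W Y"
    using assms(1,2) hom_comp unfolding product_cone_def by blast+
  then show ?thesis using assms unfolding product_cone_def by metis
qed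

lemma pullback_eqI:
  assumes P: "is_pullback C u w Q q1 q2" and k: "hom C k W Q" "hom C k' W Q"
    and eq: "ccomp C q1 k = ccomp C q1 k'" "ccomp C q2 k = ccomp C q2 k'"
  shows "k = k'"
proof -
  have q: "hom C q1 Q (cdom C u)" "hom C q2 Q (cdom C w)" "ccomp C u q1 = ccomp C w q2"
    using P unfolding is_pullback_def by blast+
  have "ccomp C u (ccomp C q1 k) = ccomp C w (ccomp C q2 k)"
    using comp_assoc[OF k(1) q(1)] comp_assoc[OF k(1) q(2)] q(3) hom_def by metis
  then have "\<exists>!l. hom C l W Q \<and> ccomp C q1 l = ccomp C q1 k \<and> ccomp C q2 l = ccomp C q2 k"
    using P hom_comp[OF k(1) q(1)] hom_comp[OF k(1) q(2)] unfolding is_pullback_def by blast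
  then show ?thesis using k eq by metis
qed

lemma pullback_unique_up_to_iso:
  assumes P: "is_pullback C u w Q q1 q2" and P': "is_pullback C u w Q' q1' q2'"
  shows "\<exists>\<phi>. hom C \<phi> Q' Q \<and> is_iso C \<phi> \<and> ccomp C q1 \<phi> = q1' \<and> ccomp C q2 \<phi> = q2'"
proof -
  have q: "hom C q1 Q (cdom C u)" "hom C q2 Q (cdom C w)" "ccomp C u q1 = ccomp C w q2"
    "hom C q1' Q' (cdom C u)" "hom C q2' Q' (cdom C w)" "ccomp C u q1' = ccomp C w q2'"
    using P P' unfolding is_pullback_def by blast+
  obtain \<phi> where \<phi>: "hom C \<phi> Q' Q" "ccomp C q1 \<phi> = q1'" "ccomp C q2 \<phi> = q2'"
    using pullback_lift[OF P q(4,5,6)] .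
  obtain \<psi> where \<psi>: "hom C \<psi> Q Q'" "ccomp C q1' \<psi> = q1" "ccomp C q2' \<psi> = q2"
    using pullback_lift[OF P' q(1,2,3)] .
  have "ccomp C \<psi> \<phi> = cid C Q'"
    by (rule pullback_eqI[OF P' hom_comp[OF \<phi>(1) \<psi>(1)] hom_id])
      (simp_all add: comp_assoc[OF \<phi>(1) \<psi>(1) q(4)] comp_assoc[OF \<phi>(1) \<psi>(1) q(5)]
        \<phi> \<psi> comp_id_right[OF q(4)] comp_id_right[OF q(5)])
  moreover have "ccomp C \<phi> \<psi> = cid C Q"
    by (rule pullback_eqI[OF P hom_comp[OF \<psi>(1) \<phi>(1)] hom_id])
      (simp_all add: comp_assoc[OF \<psi>(1) \<phi>(1) q(1)] comp_assoc[OF \<psi>(1) \<phi>(1) q(2)]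
        \<phi> \<psi> comp_id_right[OF q(1)] comp_id_right[OF q(2)])
  ultimately have "is_iso C \<phi>"
    using \<phi>(1) \<psi>(1) unfolding is_iso_def hom_def by auto
  then show ?thesis using \<phi> by blast
qed

lemma product_cone_pullback:
  assumes PZ: "product_cone C P p r B Z" and PZ': "product_cone C P' p' r' A Z"
    and f: "hom C f A B" and m: "hom C m P' P"
    and mp: "ccomp C p m = ccomp C f p'" and mr: "ccomp C r m = r'"
  shows "is_pullback C p f P' m p'"
proof -
  have pr: "hom C p P B" "hom C r P Z" "hom C p' P' A" "hom C r' P' Z"
    using PZ PZ' unfolding product_cone_def by blast+
  have lift: "\<exists>!k. hom C k W P' \<and> ccomp C m k = a \<and> ccomp C p' k = b"
    if a: "hom C a W P" and b: "hom C b W A" and ab: "ccomp C p a = ccomp C f b" for W a b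
  proof -
    have ra: "hom C (ccomp C r a) W Z" using hom_comp[OF a pr(2)] .
    obtain k where k: "hom C k W P'" "ccomp C p' k = b" "ccomp C r' k = ccomp C r a"
      using PZ' b ra unfolding product_cone_def by blast
    have mk: "ccomp C m k = a"
    proof (rule product_cone_eqI[OF PZ hom_comp[OF k(1) m] a])
      show "ccomp C p (ccomp C m k) = ccomp C p a"
        using comp_assoc[OF k(1) m pr(1)] comp_assoc[OF k(1) pr(3) f] mp k(2) ab by simp
      show "ccomp C r (ccomp C m k) = ccomp C r a"
        using comp_assoc[OF k(1) m pr(2)] mr k(3) by simp
    qed
    have "k' = k" if k': "hom C k' W P'" "ccomp C m k' = a" "ccomp C p' k' = b" for k'
    proof (rule product_cone_eqI[OF PZ' k'(1) k(1)])
      show "ccomp C p' k' = ccomp C p' k" using k(2) k'(3) by simp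
      show "ccomp C r' k' = ccomp C r' k"
        using comp_assoc[OF k'(1) m pr(2)] mr k'(2) k(3) by simp
    qed
    then show ?thesis using k(1,2) mk by blast
  qed
  show ?thesis
    unfolding is_pullback_def using pr f m mp lift by (auto simp: hom_def)
qed

context
  assumes prd: "has_products C"
begin

lemma hom_pair: "hom C f W X \<Longrightarrow> hom C g W Y \<Longrightarrow> hom C (pair C f g) W (cprod C X Y)"
  and cpr1_pair: "hom C f W X \<Longrightarrow> hom C g W Y \<Longrightarrow> ccomp C (cpr1 C X Y) (pair C f g) = f"
  and cpr2_pair: "hom C f W X \<Longrightarrow> hom C g W Y \<Longrightarrow> ccomp C (cpr2 C X Y) (pair C f g) = g"
proof -
  assume f: "hom C f W X" and g: "hom C g W Y"
  have "\<exists>!k. hom C k W (cprod C X Y) \<and> ccomp C (cpr1 C X Y) k = f \<and> ccomp C (cpr2 C X Y) k = g"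
    using prd f g unfolding has_products_def by blast
  then have "hom C (pair C f g) W (cprod C X Y) \<and> ccomp C (cpr1 C X Y) (pair C f g) = f \<and>
      ccomp C (cpr2 C X Y) (pair C f g) = g"
    unfolding pair_def using f g by (simp add: hom_def) (rule theI')
  then show "hom C (pair C f g) W (cprod C X Y)" "ccomp C (cpr1 C X Y) (pair C f g) = f"
    "ccomp C (cpr2 C X Y) (pair C f g) = g" by blast+
qed

lemma hom_cpr: "hom C (cpr1 C X Y) (cprod C X Y) X" "hom C (cpr2 C X Y) (cprod C X Y) Y"
  using prd unfolding has_products_def by blast+

lemma pair_unique:
  assumes "hom C f W X" "hom C g W Y" "hom C k W (cprod C X Y)"
    "ccomp C (cpr1 C X Y) k = f" "ccomp C (cpr2 C X Y) k = g"
  shows "k = pair C f g"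
  using product_cone_eqI[OF product_cone_cprod[OF prd] assms(3) hom_pair[OF assms(1,2)]]
    assms cpr1_pair cpr2_pair by simp

lemma pair_comp:
  assumes f: "hom C f W X" and g: "hom C g W Y" and k: "hom C k V W"
  shows "ccomp C (pair C f g) k = pair C (ccomp C f k) (ccomp C g k)"
  by (rule pair_unique[OF hom_comp[OF k f] hom_comp[OF k g] hom_comp[OF k hom_pair[OF f g]]])
    (simp_all add: comp_assoc[OF k hom_pair[OF f g] hom_cpr(1)]
      comp_assoc[OF k hom_pair[OF f g] hom_cpr(2)] cpr1_pair[OF f g] cpr2_pair[OF f g])

lemma hom_prodmap:
  "hom C f A A' \<Longrightarrow> hom C g B B' \<Longrightarrow> hom C (prodmap C f g) (cprod C A B) (cprod C A' B')"
  using prodmap_eq hom_pair[OF hom_comp[OF hom_cpr(1)] hom_comp[OF hom_cpr(2)]] by metis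

lemma cpr1_prodmap:
  "hom C f A A' \<Longrightarrow> hom C g B B' \<Longrightarrow>
   ccomp C (cpr1 C A' B') (prodmap C f g) = ccomp C f (cpr1 C A B)"
  and cpr2_prodmap:
  "hom C f A A' \<Longrightarrow> hom C g B B' \<Longrightarrow>
   ccomp C (cpr2 C A' B') (prodmap C f g) = ccomp C g (cpr2 C A B)"
  using prodmap_eq cpr1_pair[OF hom_comp[OF hom_cpr(1)] hom_comp[OF hom_cpr(2)]]
    cpr2_pair[OF hom_comp[OF hom_cpr(1)] hom_comp[OF hom_cpr(2)]] by metis+

lemma prodmap_pair:
  assumes f: "hom C f A A'" and g: "hom C g B B'" and a: "hom C a W A" and b: "hom C b W B"
  shows "ccomp C (prodmap C f g) (pair C a b) = pair C (ccomp C f a) (ccomp C g b)"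
proof -
  have "ccomp C (prodmap C f g) (pair C a b) =
      pair C (ccomp C (ccomp C f (cpr1 C A B)) (pair C a b))
        (ccomp C (ccomp C g (cpr2 C A B)) (pair C a b))"
    using prodmap_eq[OF f g]
      pair_comp[OF hom_comp[OF hom_cpr(1) f] hom_comp[OF hom_cpr(2) g] hom_pair[OF a b]]
    by simp
  also have "\<dots> = pair C (ccomp C f a) (ccomp C g b)"
    using comp_assoc[OF hom_pair[OF a b] hom_cpr(1) f] comp_assoc[OF hom_pair[OF a b] hom_cpr(2) g]
      cpr1_pair[OF a b] cpr2_pair[OF a b] by simp
  finally show ?thesis .
qed

lemma prodmap_comp:
  assumes f: "hom C f A A'" and g: "hom C g B B'" and f': "hom C f' A' A''" and g': "hom C g' B' B''"
  shows "ccomp C (prodmap C f' g') (prodmap C f g) = prodmap C (ccomp C f' f) (ccomp C g' g)"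
  using prodmap_pair[OF f' g' hom_comp[OF hom_cpr(1) f] hom_comp[OF hom_cpr(2) g]]
    prodmap_eq[OF f g] prodmap_eq[OF hom_comp[OF f f'] hom_comp[OF g g']]
    comp_assoc[OF hom_cpr(1) f f'] comp_assoc[OF hom_cpr(2) g g'] by simp

lemma prodmap_id_right_pullback:
  assumes f: "hom C f A B"
  shows "is_pullback C (cpr1 C B Z) f (cprod C A Z) (prodmap C f (cid C Z)) (cpr1 C A Z)"
  by (rule product_cone_pullback[OF product_cone_cprod[OF prd] product_cone_cprod[OF prd] f
        hom_prodmap[OF f hom_id] cpr1_prodmap[OF f hom_id]])
    (simp add: cpr2_prodmap[OF f hom_id] comp_id_left[OF hom_cpr(2)])

lemma prodmap_id_left_pullback:
  assumes f: "hom C f A B"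
  shows "is_pullback C (cpr2 C Z B) f (cprod C Z A) (prodmap C (cid C Z) f) (cpr2 C Z A)"
  by (rule product_cone_pullback[OF product_cone_swap[OF product_cone_cprod[OF prd]]
        product_cone_swap[OF product_cone_cprod[OF prd]] f
        hom_prodmap[OF hom_id f] cpr2_prodmap[OF hom_id f]])
    (simp add: cpr1_prodmap[OF hom_id f] comp_id_left[OF hom_cpr(1)])

end

end

abbreviation path_ends :: "('o,'a) pcat \<Rightarrow> 'o \<Rightarrow> 'a" where
  "path_ends C A \<equiv> pair C (d0 C A) (d1 C A)"

lemma P_category_is_category: "P_category C \<Longrightarrow> is_category C"
  and P_category_has_products: "P_category C \<Longrightarrow> has_products C"
  and P_category_functorial_path: "P_category C \<Longrightarrow> functorial_path C"
  by (simp_all add: P_category_def)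

lemma hom_d0: "functorial_path C \<Longrightarrow> hom C (d0 C A) (Po C A) A"
  and hom_d1: "functorial_path C \<Longrightarrow> hom C (d1 C A) (Po C A) A"
  and hom_Pa: "functorial_path C \<Longrightarrow> hom C f A B \<Longrightarrow> hom C (Pa C f) (Po C A) (Po C B)"
  unfolding functorial_path_def is_functor_P_def hom_def by blast+

lemma d0_Pa: "functorial_path C \<Longrightarrow> hom C f A B \<Longrightarrow> ccomp C (d0 C B) (Pa C f) = ccomp C f (d0 C A)"
  and d1_Pa: "functorial_path C \<Longrightarrow> hom C f A B \<Longrightarrow> ccomp C (d1 C B) (Pa C f) = ccomp C f (d1 C A)"
  unfolding functorial_path_def hom_def by blast+

context
  fixes C :: "('o,'a) pcat"
  assumes PC: "P_category C"
begin

private lemmas cat = P_category_is_category[OF PC]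
  and prd = P_category_has_products[OF PC]
  and fp = P_category_functorial_path[OF PC]

lemma iso_trivfib: "is_iso C f \<Longrightarrow> f \<in> trivfib C"
proof -
  have "\<forall>f. is_iso C f \<longrightarrow> f \<in> fib C \<and> f \<in> we C"
    using PC unfolding P_category_def by (elim conjE) assumption
  then show "is_iso C f \<Longrightarrow> f \<in> trivfib C" unfolding trivfib_def by blast
qed

lemma we_comp:
  assumes "hom C f X Y" "hom C g Y Z" "f \<in> we C" "g \<in> we C"
  shows "ccomp C g f \<in> we C"
proof -
  have "\<forall>f g. cdom C g = ccod C f \<longrightarrow> f \<in> we C \<longrightarrow> g \<in> we C \<longrightarrow> ccomp C g f \<in> we C"
    using PC unfolding P_category_def by (elim conjE) assumption
  then show ?thesis using assms unfolding hom_def by blast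
qed

lemma trivfib_comp:
  assumes "hom C f X Y" "hom C g Y Z" "f \<in> trivfib C" "g \<in> trivfib C"
  shows "ccomp C g f \<in> trivfib C"
proof -
  have "\<forall>f g. cdom C g = ccod C f \<longrightarrow> f \<in> fib C \<longrightarrow> g \<in> fib C \<longrightarrow> ccomp C g f \<in> fib C"
    using PC unfolding P_category_def by (elim conjE) assumption
  then show ?thesis using assms we_comp unfolding trivfib_def hom_def by blast
qed

lemma we_cancel_left:
  assumes "hom C f X Y" "hom C g Y Z" "g \<in> we C" "ccomp C g f \<in> we C"
  shows "f \<in> we C"
proof -
  have "\<forall>f g. cdom C g = ccod C f \<longrightarrow> g \<in> we C \<longrightarrow> ccomp C g f \<in> we C \<longrightarrow> f \<in> we C"
    using PC unfolding P_category_def by (elim conjE) assumption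
  then show ?thesis using assms unfolding hom_def by blast
qed

lemma path_ends_fib: "path_ends C A \<in> fib C"
proof -
  have "\<forall>A. iota C A \<in> we C \<and> path_ends C A \<in> fib C \<and> d0 C A \<in> trivfib C \<and> d1 C A \<in> trivfib C"
    using PC unfolding P_category_def by (elim conjE) assumption
  then show ?thesis by blast
qed

lemma Pa_we: "f \<in> we C \<Longrightarrow> Pa C f \<in> we C"
proof -
  have "\<forall>f. f \<in> we C \<longrightarrow> Pa C f \<in> we C"
    using PC unfolding P_category_def by (elim conjE) assumption
  then show "f \<in> we C \<Longrightarrow> Pa C f \<in> we C" by blast
qed

lemma pullback_exists:
  assumes "ccod C u = ccod C w" "w \<in> fib C"
  obtains Q q1 q2 where "is_pullback C u w Q q1 q2"
    "w \<in> trivfib C \<Longrightarrow> q1 \<in> trivfib C" "u \<in> we C \<Longrightarrow> q2 \<in> we C"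
proof -
  have "\<forall>u w. ccod C u = ccod C w \<longrightarrow> w \<in> fib C \<longrightarrow>
        (\<exists>Q q1 q2. is_pullback C u w Q q1 q2 \<and> q1 \<in> fib C \<and>
           (w \<in> trivfib C \<longrightarrow> q1 \<in> trivfib C) \<and> (u \<in> we C \<longrightarrow> q2 \<in> we C))"
    using PC unfolding P_category_def by (elim conjE) assumption
  then show ?thesis using assms that by blast
qed

lemma path_ends_comparison_fib:
  assumes "v \<in> fib C" "hom C v A B"
    "is_pullback C (prodmap C v v) (path_ends C B) Q q1 q2" "hom C k (Po C A) Q"
    "ccomp C q1 k = path_ends C A" "ccomp C q2 k = Pa C v"
  shows "k \<in> fib C"
proof -
  have "\<forall>v. v \<in> fib C \<longrightarrow>
        (\<forall>Q q1 q2 k. is_pullback C (prodmap C v v) (path_ends C (ccod C v)) Q q1 q2 \<longrightarrow>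
           hom C k (Po C (cdom C v)) Q \<longrightarrow> ccomp C q1 k = path_ends C (cdom C v) \<longrightarrow>
           ccomp C q2 k = Pa C v \<longrightarrow> k \<in> fib C)"
    using PC unfolding P_category_def by (elim conjE) assumption
  then show ?thesis using assms unfolding hom_def by blast
qed

text \<open>(P3) is a statement about some pullback; any other one is isomorphic to it over the
cospan, and isomorphisms are trivial fibrations.\<close>

lemma pullback_trivfib:
  assumes w: "w \<in> trivfib C" and P: "is_pullback C u w Q q1 q2"
  shows "q1 \<in> trivfib C"
proof -
  have "ccod C u = ccod C w" "w \<in> fib C"
    using P w unfolding is_pullback_def trivfib_def by auto
  then obtain Q' q1' q2' where P': "is_pullback C u w Q' q1' q2'" and q1': "q1' \<in> trivfib C"
    using pullback_exists w by metis
  obtain \<phi> where \<phi>: "hom C \<phi> Q Q'" "is_iso C \<phi>" "ccomp C q1' \<phi> = q1"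
    using pullback_unique_up_to_iso[OF cat P' P] by blast
  have "hom C q1' Q' (cdom C u)" using P' unfolding is_pullback_def by blast
  then show ?thesis using trivfib_comp[OF \<phi>(1)] iso_trivfib[OF \<phi>(2)] q1' \<phi>(3) by metis
qed

lemma pullback_we:
  assumes w: "w \<in> fib C" and u: "u \<in> we C" and P: "is_pullback C u w Q q1 q2"
  shows "q2 \<in> we C"
proof -
  have "ccod C u = ccod C w" using P unfolding is_pullback_def by auto
  then obtain Q' q1' q2' where P': "is_pullback C u w Q' q1' q2'" and q2': "q2' \<in> we C"
    using pullback_exists w u by metis
  obtain \<phi> where \<phi>: "hom C \<phi> Q Q'" "is_iso C \<phi>" "ccomp C q2' \<phi> = q2"
    using pullback_unique_up_to_iso[OF cat P' P] by blast
  have "hom C q2' Q' (cdom C w)" using P' unfolding is_pullback_def by blast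
  then show ?thesis
    using we_comp[OF \<phi>(1)] iso_trivfib[OF \<phi>(2)] q2' \<phi>(3) unfolding trivfib_def by blast
qed

lemma prodmap_trivfib:
  assumes v: "v \<in> trivfib C" "hom C v A B" and w: "w \<in> trivfib C" "hom C w A' B'"
  shows "prodmap C v w \<in> trivfib C"
proof -
  have "prodmap C (cid C A) w \<in> trivfib C"
    by (rule pullback_trivfib[OF w(1) prodmap_id_left_pullback[OF cat prd w(2)]])
  moreover have "prodmap C v (cid C B') \<in> trivfib C"
    by (rule pullback_trivfib[OF v(1) prodmap_id_right_pullback[OF cat prd v(2)]])
  ultimately have "ccomp C (prodmap C v (cid C B')) (prodmap C (cid C A) w) \<in> trivfib C"
    using trivfib_comp hom_prodmap[OF cat prd] hom_id[OF cat] v(2) w(2) by metis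
  then show ?thesis
    using prodmap_comp[OF cat prd hom_id[OF cat] w(2) v(2) hom_id[OF cat]]
      comp_id_left[OF cat w(2)] comp_id_right[OF cat v(2)] by simp
qed

lemma path_ends_Pa:
  assumes v: "hom C v A B"
  shows "ccomp C (path_ends C B) (Pa C v) = ccomp C (prodmap C v v) (path_ends C A)"
proof -
  note d = hom_d0[OF fp] hom_d1[OF fp]
  have "ccomp C (path_ends C B) (Pa C v) = pair C (ccomp C (d0 C B) (Pa C v)) (ccomp C (d1 C B) (Pa C v))"
    by (rule pair_comp[OF cat prd d hom_Pa[OF fp v]])
  also have "\<dots> = pair C (ccomp C v (d0 C A)) (ccomp C v (d1 C A))"
    using d0_Pa[OF fp v] d1_Pa[OF fp v] by simp
  also have "\<dots> = ccomp C (prodmap C v v) (path_ends C A)"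
    by (rule prodmap_pair[OF cat prd v v d, symmetric])
  finally show ?thesis .
qed

lemma path_ends_comparison_trivfib:
  assumes v: "v \<in> trivfib C" "hom C v A B"
    and P: "is_pullback C (prodmap C v v) (path_ends C B) Q q1 q2" and k: "hom C k (Po C A) Q"
    and k1: "ccomp C q1 k = path_ends C A" and k2: "ccomp C q2 k = Pa C v"
  shows "k \<in> trivfib C"
proof -
  have "k \<in> fib C"
    using path_ends_comparison_fib v P k k1 k2 unfolding trivfib_def by blast
  moreover have "k \<in> we C"
  proof (rule we_cancel_left[OF k])
    show q2: "hom C q2 Q (Po C B)" using P hom_pair[OF cat prd hom_d0[OF fp] hom_d1[OF fp]]
      unfolding is_pullback_def hom_def by auto
    show "q2 \<in> we C"
      using pullback_we[OF path_ends_fib _ P] prodmap_trivfib[OF v v] unfolding trivfib_def by blast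
    show "ccomp C q2 k \<in> we C" using k2 Pa_we v(1) unfolding trivfib_def by auto
  qed
  ultimately show ?thesis unfolding trivfib_def by blast
qed

end

theorem lemma2p21:
  fixes C :: "('o, 'a) pcat"
  assumes "P_category C"
    and "cofibrant C X"
    and "v \<in> trivfib C" and "hom C v A B"
    and "hom C f0 X A" and "hom C f1 X A"
    and "hom C h X (Po C B)"
    and "ccomp C (pair C (d0 C B) (d1 C B)) h = pair C (ccomp C v f0) (ccomp C v f1)"
  shows "\<exists>h'. hom C h' X (Po C A) \<and>
           ccomp C (pair C (d0 C A) (d1 C A)) h' = pair C f0 f1 \<and>
           ccomp C (Pa C v) h' = h"
proof -
  note PC = assms(1) and v = assms(3,4) and f = assms(5,6) and h = assms(7,8)
  note cat = P_category_is_category[OF PC] and prd = P_category_has_products[OF PC]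
    and fp = P_category_functorial_path[OF PC]
  have ends: "hom C (path_ends C Y) (Po C Y) (cprod C Y Y)" for Y
    by (rule hom_pair[OF cat prd hom_d0[OF fp] hom_d1[OF fp]])
  have vv: "hom C (prodmap C v v) (cprod C A A) (cprod C B B)"
    by (rule hom_prodmap[OF cat prd v(2) v(2)])
  obtain Q q1 q2 where P: "is_pullback C (prodmap C v v) (path_ends C B) Q q1 q2"
    using pullback_exists[OF PC _ path_ends_fib[OF PC]] vv ends unfolding hom_def by metis
  obtain k where k: "hom C k (Po C A) Q" "ccomp C q1 k = path_ends C A" "ccomp C q2 k = Pa C v"
    using pullback_lift[OF P] vv ends hom_Pa[OF fp v(2)] path_ends_Pa[OF PC v(2)]
    unfolding hom_def by metis
  have "ccomp C (prodmap C v v) (pair C f0 f1) = ccomp C (path_ends C B) h"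
    using prodmap_pair[OF cat prd v(2) v(2) f] h(2) by simp
  then obtain m where m: "hom C m X Q" "ccomp C q1 m = pair C f0 f1" "ccomp C q2 m = h"
    using pullback_lift[OF P] vv ends h(1) hom_pair[OF cat prd f] unfolding hom_def by metis
  obtain g where g: "hom C g X (Po C A)" "ccomp C k g = m"
    using assms(2) path_ends_comparison_trivfib[OF PC v P k] k m(1)
    unfolding cofibrant_def hom_def by metis
  have q: "hom C q1 Q (cprod C A A)" "hom C q2 Q (Po C B)"
    using P vv ends unfolding is_pullback_def hom_def by auto
  have "ccomp C (path_ends C A) g = pair C f0 f1"
    using comp_assoc[OF cat g(1) k(1) q(1)] k(2) g(2) m(2) by simp
  moreover have "ccomp C (Pa C v) g = h"
    using comp_assoc[OF cat g(1) k(1) q(2)] k(3) g(2) m(3) by simp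
  ultimately show ?thesis using g(1) by blast
qed

end
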